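(* Fix $\theta=\pi/8$ and, for an angle $\alpha$, let $\phi_\alpha=\cos(\alpha)|0\rangle+\sin(\alpha)|1\rangle$. Define the single-qubit states $\phi_{0,0}=\phi_{-\theta}$, $\phi_{0,1}=\phi_{\theta}$, $\phi_{1,0}=\phi_{\pi/2-\theta}$, $\phi_{1,1}=\phi_{\pi/2+\theta}$. Consider the following two-party quantum protocol (the "biased coin flipping protocol"): (1) Alice picks $b,x\in\{0,1\}$ uniformly at random and sends the qubit $\phi_{b,x}$ to Bob. (2) Bob picks $b'\in\{0,1\}$ uniformly at random and sends it to Alice. (3) Alice sends $b$ and $x$ to Bob. Bob checks them against the qubit received in step (1) by measuring it in the orthonormal basis $\{\phi_{0,x},\phi_{1,x}\}$ and verifying that the outcome is $\phi_{b,x}$. The result of the game is $err$ if the check fails (Alice is caught cheating) and $b\oplus b'$ otherwise. Then this protocol is a quantum coin flipping protocol with bias $\delta\le 0.42$.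
   Context: A quantum coin flipping protocol with bias $\delta$ is a quantum communication protocol between Alice and Bob at the end of which each decides on a value in $\{0,1,err\}$; let $c_A$ and $c_B$ denote Alice's and Bob's results. It is required that: (i) if both players are honest, then always $c_A=c_B$, $\Pr(c_A=err)=0$ and $\Pr(c_A=0)=\Pr(c_A=1)=1/2$; (ii) if one player is honest and the other follows an arbitrary (all-powerful quantum) strategy, then the honest player's result $c$ satisfies $\Pr(c=b)\le \tfrac12+\delta$ for every $b\in\{0,1\}$. Classical bits sent as qubits are measured by the receiver in the computational basis $\{|0\rangle,|1\rangle\}$. *)

theory Defs
  imports Complex_Main
begin

(* Bits are represented by bool (False = 0, True = 1); XOR b \<oplus> b' is (b \<noteq> b'). *)

datatype outcome = Bit bool | Err

definition theta :: real where
  "theta = pi / 8"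

definition phi_ang :: "real \<Rightarrow> bool \<Rightarrow> complex" where
  "phi_ang \<alpha> q = (if q then complex_of_real (sin \<alpha>) else complex_of_real (cos \<alpha>))"

definition angle :: "bool \<Rightarrow> bool \<Rightarrow> real" where
  "angle b x = (if \<not> b \<and> \<not> x then - theta
               else if \<not> b \<and> x then theta
               else if b \<and> \<not> x then pi/2 - theta
               else pi/2 + theta)"

definition phi :: "bool \<Rightarrow> bool \<Rightarrow> bool \<Rightarrow> complex" where
  "phi b x = phi_ang (angle b x)"

definition braket :: "('n::finite \<Rightarrow> complex) \<Rightarrow> ('n \<Rightarrow> complex) \<Rightarrow> complex" where
  "braket u v = (\<Sum>i\<in>UNIV. cnj (u i) * v i)"

definition proj :: "('n \<Rightarrow> complex) \<Rightarrow> 'n \<Rightarrow> 'n \<Rightarrow> complex" where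
  "proj u i j = u i * cnj (u j)"

definition psd :: "('n::finite \<Rightarrow> 'n \<Rightarrow> complex) \<Rightarrow> bool" where
  "psd A \<longleftrightarrow> (\<forall>v::'n \<Rightarrow> complex.
      let q = (\<Sum>i\<in>UNIV. \<Sum>j\<in>UNIV. cnj (v i) * A i j * v j) in Im q = 0 \<and> Re q \<ge> 0)"

definition density :: "('n::finite \<Rightarrow> 'n \<Rightarrow> complex) \<Rightarrow> bool" where
  "density \<rho> \<longleftrightarrow> psd \<rho> \<and> (\<Sum>i\<in>UNIV. \<rho> i i) = 1"

definition povm :: "('o::finite \<Rightarrow> 'n::finite \<Rightarrow> 'n \<Rightarrow> complex) \<Rightarrow> bool" where
  "povm M \<longleftrightarrow> (\<forall>k. psd (M k)) \<and>
     (\<forall>i j. (\<Sum>k\<in>UNIV. M k i j) = (if i = j then 1 else 0))"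

definition tensor :: "('a \<Rightarrow> 'a \<Rightarrow> complex) \<Rightarrow> ('b \<Rightarrow> 'b \<Rightarrow> complex)
    \<Rightarrow> ('a \<times> 'b) \<Rightarrow> ('a \<times> 'b) \<Rightarrow> complex" where
  "tensor A B = (\<lambda>(i, k) (j, l). A i j * B k l)"

definition trace_prod :: "('n::finite \<Rightarrow> 'n \<Rightarrow> complex) \<Rightarrow> ('n \<Rightarrow> 'n \<Rightarrow> complex) \<Rightarrow> complex" where
  "trace_prod A B = (\<Sum>i\<in>UNIV. \<Sum>j\<in>UNIV. A i j * B j i)"

(* Honest execution: joint distribution of (c_A, c_B).  b, x, b' uniform;
   Bob measures phi_{b,x} in basis {phi_{0,x}, phi_{1,x}}, obtains phi_{b'',x}
   with probability |<phi_{b'',x}|phi_{b,x}>|^2; check passes iff b'' = b. *)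
definition honest_joint :: "outcome \<Rightarrow> outcome \<Rightarrow> real" where
  "honest_joint cA cB =
     (\<Sum>b\<in>UNIV. \<Sum>x\<in>UNIV. \<Sum>b'\<in>UNIV. \<Sum>b''\<in>UNIV.
        (1/8) * (cmod (braket (phi b'' x) (phi b x)))\<^sup>2 *
        (if cA = Bit (b \<noteq> b') \<and> cB = (if b'' = b then Bit (b \<noteq> b') else Err) then 1 else 0))"

definition honest_A :: "outcome \<Rightarrow> real" where
  "honest_A c = (\<Sum>c'\<in>{Bit False, Bit True, Err}. honest_joint c c')"

(* Alice's most general strategy: an arbitrary
   joint state rho on (sent qubit) \<otimes> C^'d (her private system, any finite dimension),
   and, for each received b', a POVM M b' on C^'d with outcome (b,x) that she sends.
   Bob measures the qubit in {phi_{0,x}, phi_{1,x}}; result Bit (b xor b') if the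
   outcome is phi_{b,x}, Err otherwise. *)
definition cheatA_dist :: "((bool \<times> 'd::finite) \<Rightarrow> (bool \<times> 'd) \<Rightarrow> complex)
    \<Rightarrow> (bool \<Rightarrow> bool \<times> bool \<Rightarrow> 'd \<Rightarrow> 'd \<Rightarrow> complex) \<Rightarrow> outcome \<Rightarrow> real" where
  "cheatA_dist \<rho> M c =
     (\<Sum>b'\<in>UNIV. \<Sum>b\<in>UNIV. \<Sum>x\<in>UNIV. \<Sum>b''\<in>UNIV.
        (1/2) * Re (trace_prod (tensor (proj (phi b'' x)) (M b' (b, x))) \<rho>) *
        (if c = (if b'' = b then Bit (b \<noteq> b') else Err) then 1 else 0))"

(* Cheating Bob with honest Alice.  Bob's most general strategy: a two-outcome
   POVM N on the received qubit, whose outcome b' he sends; Alice outputs b xor b'. *)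
definition cheatB_dist :: "(bool \<Rightarrow> bool \<Rightarrow> bool \<Rightarrow> complex) \<Rightarrow> outcome \<Rightarrow> real" where
  "cheatB_dist N c =
     (\<Sum>b\<in>UNIV. \<Sum>x\<in>UNIV. \<Sum>b'\<in>UNIV.
        (1/4) * Re (trace_prod (N b') (proj (phi b x))) *
        (if c = Bit (b \<noteq> b') then 1 else 0))"

end

theory Submission
  imports Defs
begin

(* Honest play: for fixed x the states phi_{0,x}, phi_{1,x} form an orthonormal basis, so Bob's
   check always passes and b xor b' is uniform.

   Cheating Bob can only measure the qubit, whose state given b is the mixture of P_{b,0} and
   P_{b,1}, where P_{b,x} is the projector onto phi_{b,x}. Since P_{b,0} + P_{b,1} <= 2 cos^2 theta I,
   he obtains a prescribed value of b xor b' with probability at most cos^2 theta = 1/2 + sqrt 2 / 4.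

   Cheating Alice: for each b a single diagonal operator B_b dominates both P_{b,0} and P_{b,1},
   and B_0 + B_1 = (1 + sin 2 theta) I. As her POVM elements sum to the identity, once Bob has
   announced b' she passes the check with the value b = c xor b' with probability at most
   Tr((B_b \<otimes> I) rho), and averaging over b' gives (1 + sin 2 theta) / 2 = 1/2 + sqrt 2 / 4.

   Both bounds rest on Re Tr(A B) >= 0 for positive semidefinite A and B, which follows by writing A
   as a sum of rank-one projectors; these are found by eliminating one index at a time through
   Schur complements. *)

section \<open>Positive semidefinite matrices\<close>

definition quad_form :: "('n::finite \<Rightarrow> 'n \<Rightarrow> complex) \<Rightarrow> ('n \<Rightarrow> complex) \<Rightarrow> complex" where
  "quad_form A v = (\<Sum>i\<in>UNIV. \<Sum>j\<in>UNIV. cnj (v i) * A i j * v j)"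

lemma psd_iff_quad_form: "psd A \<longleftrightarrow> (\<forall>v. Im (quad_form A v) = 0 \<and> Re (quad_form A v) \<ge> 0)"
  unfolding psd_def quad_form_def Let_def by simp

lemma quad_form_add_unit:
  "quad_form A (\<lambda>k. v k + (if k = p then t else 0)) =
     quad_form A v + cnj t * (\<Sum>j\<in>UNIV. A p j * v j) + t * (\<Sum>i\<in>UNIV. cnj (v i) * A i p)
     + cnj t * A p p * t"
proof -
  have "cnj (v i + (if i = p then t else 0)) * A i j * (v j + (if j = p then t else 0)) =
     cnj (v i) * A i j * v j + (if j = p then t * (cnj (v i) * A i p) else 0)
     + (if i = p then cnj t * (A p j * v j) else 0)
     + (if i = p then if j = p then cnj t * A p p * t else 0 else 0)"
    for i j by (auto simp: algebra_simps)
  moreover have "(\<Sum>j\<in>UNIV. if P then f j else 0) = (if P then \<Sum>j\<in>UNIV. f j else 0)"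
    for P and f :: "'a \<Rightarrow> complex" by simp
  ultimately show ?thesis
    unfolding quad_form_def
    by (simp add: sum.distrib sum_distrib_left if_distrib[of "\<lambda>x. x * _"] cong: if_cong)
qed

lemma quad_form_unit: "quad_form A (\<lambda>k. if k = p then t else 0) = cnj t * A p p * t"
  using quad_form_add_unit[of A "\<lambda>_. 0" p t] by (simp add: quad_form_def)

lemma quad_form_two_units:
  assumes "i \<noteq> j"
  shows "quad_form A (\<lambda>k. (if k = i then x else 0) + (if k = j then y else 0)) =
    cnj x * A i i * x + cnj y * A j i * x + y * cnj x * A i j + cnj y * A j j * y"
proof -
  have "(\<Sum>k\<in>UNIV. A j k * (if k = i then x else 0)) = A j i * x"
    "(\<Sum>k\<in>UNIV. cnj (if k = i then x else 0) * A k j) = cnj x * A i j"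
    by (simp_all add: if_distrib[of "\<lambda>z. _ * z"] if_distrib[of "\<lambda>z. z * _"] if_distrib[of cnj]
        cong: if_cong)
  then show ?thesis
    using assms by (simp add: quad_form_add_unit quad_form_unit algebra_simps)
qed

lemma psd_diag_nonneg_real:
  assumes "psd A"
  shows "A i i = of_real (Re (A i i))" "Re (A i i) \<ge> 0"
proof -
  have "quad_form A (\<lambda>k. if k = i then 1 else 0) = A i i"
    by (simp add: quad_form_unit)
  then have "Im (A i i) = 0 \<and> Re (A i i) \<ge> 0"
    using assms unfolding psd_iff_quad_form by metis
  then show "A i i = of_real (Re (A i i))" "Re (A i i) \<ge> 0"
    by (simp_all add: complex_eq_iff)
qed

lemma psd_hermitian:
  assumes "psd A"
  shows "A j i = cnj (A i j)"
proof (cases "i = j")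
  case True
  then show ?thesis using psd_diag_nonneg_real[OF assms, of i] by (simp add: complex_eq_iff)
next
  case False
  have "Im (quad_form A (\<lambda>k. (if k = i then 1 else 0) + (if k = j then t else 0))) = 0" for t
    using assms by (simp add: psd_iff_quad_form)
  from this[of 1] this[of \<i>] show ?thesis
    using False psd_diag_nonneg_real[OF assms, of i] psd_diag_nonneg_real[OF assms, of j]
    by (simp add: quad_form_two_units complex_eq_iff)
qed

lemma psd_zero_diag_row:
  assumes "psd A" "A p p = 0"
  shows "A p j = 0"
proof (rule ccontr)
  assume nz: "A p j \<noteq> 0"
  then have "p \<noteq> j" using assms(2) by auto
  define r where "r = (Re (A j j) + 1) / (2 * (cmod (A p j))\<^sup>2)"
  have "Re (quad_form A (\<lambda>k. (if k = p then - of_real r * A p j else 0)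
      + (if k = j then 1 else 0))) \<ge> 0"
    using assms(1) by (simp add: psd_iff_quad_form)
  then have "2 * r * (cmod (A p j))\<^sup>2 \<le> Re (A j j)"
    using \<open>p \<noteq> j\<close> assms psd_hermitian[OF assms(1), of p j]
    by (simp add: quad_form_two_units cmod_power2 algebra_simps flip: power2_eq_square)
  moreover have "2 * r * (cmod (A p j))\<^sup>2 = Re (A j j) + 1"
    using nz by (simp add: r_def)
  ultimately show False by simp
qed

lemma psd_schur_complement:
  assumes "psd A" "A p p \<noteq> 0"
  shows "psd (\<lambda>i j. A i j - A i p * A p j / A p p)" (is "psd ?S")
  unfolding psd_iff_quad_form
proof
  fix v
  define s where "s = (\<Sum>j\<in>UNIV. A p j * v j)"
  have col: "(\<Sum>i\<in>UNIV. cnj (v i) * A i p) = cnj s"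
    unfolding s_def cnj_sum by (simp add: psd_hermitian[OF assms(1), of _ p] mult.commute)
  have real: "cnj (A p p) = A p p"
    using psd_hermitian[OF assms(1), of p p] by simp
  have "quad_form ?S v = quad_form A v - (\<Sum>i\<in>UNIV. cnj (v i) * A i p) * s / A p p"
    unfolding quad_form_def s_def
    by (simp add: algebra_simps sum_subtractf sum_distrib_left sum_distrib_right sum_divide_distrib)
  also have "\<dots> = quad_form A (\<lambda>k. v k + (if k = p then - s / A p p else 0))"
    unfolding quad_form_add_unit col s_def[symmetric] using assms(2) real
    by (simp add: field_simps)
  finally show "Im (quad_form ?S v) = 0 \<and> Re (quad_form ?S v) \<ge> 0"
    using assms(1) by (simp add: psd_iff_quad_form)
qed

definition sum_proj :: "('n \<Rightarrow> complex) list \<Rightarrow> 'n \<Rightarrow> 'n \<Rightarrow> complex" where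
  "sum_proj ws i j = (\<Sum>w\<leftarrow>ws. proj w i j)"

lemma sum_proj_Nil [simp]: "sum_proj [] = (\<lambda>_ _. 0)"
  by (simp add: sum_proj_def fun_eq_iff)

lemma sum_proj_Cons [simp]: "sum_proj (w # ws) = (\<lambda>i j. proj w i j + sum_proj ws i j)"
  by (simp add: sum_proj_def fun_eq_iff)

lemma psd_supported_imp_sum_proj:
  assumes "finite S" "psd A" "\<And>i j. i \<notin> S \<or> j \<notin> S \<Longrightarrow> A i j = 0"
  shows "\<exists>ws. A = sum_proj ws"
  using assms
proof (induction S arbitrary: A rule: finite_induct)
  case empty
  then have "A = (\<lambda>_ _. 0)" by auto
  then show ?case by (metis sum_proj_Nil)
next
  case (insert p S)
  note herm = psd_hermitian[OF insert.prems(1)]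
  show ?case
  proof (cases "A p p = 0")
    case True
    then have "A p j = 0" "A j p = 0" for j
      using psd_zero_diag_row[OF insert.prems(1)] herm[of p j] by auto
    then have "i \<notin> S \<or> j \<notin> S \<Longrightarrow> A i j = 0" for i j
      using insert.prems(2) by (cases "i = p"; cases "j = p") auto
    then show ?thesis using insert.IH[OF insert.prems(1)] by blast
  next
    case False
    define \<alpha> where "\<alpha> = Re (A p p)"
    have "A p p = of_real \<alpha>" "\<alpha> \<ge> 0"
      unfolding \<alpha>_def using psd_diag_nonneg_real[OF insert.prems(1)] by auto
    with False have \<alpha>: "A p p = of_real \<alpha>" "\<alpha> > 0" by auto
    define w where "w i = A i p / of_real (sqrt \<alpha>)" for i
    have proj_w: "proj w i j = A i p * A p j / A p p" for i j
      using \<alpha> herm[of j p] by (simp add: proj_def w_def flip: of_real_mult)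
    let ?S = "\<lambda>i j. A i j - A i p * A p j / A p p"
    have "i \<notin> S \<or> j \<notin> S \<Longrightarrow> ?S i j = 0" for i j
      using insert.prems(2) False by (cases "i = p"; cases "j = p") auto
    then obtain ws where ws: "?S = sum_proj ws"
      using insert.IH[OF psd_schur_complement[OF insert.prems(1) False]] by blast
    have "A i j = proj w i j + ?S i j" for i j
      by (simp add: proj_w)
    then have "A = sum_proj (w # ws)"
      by (simp add: fun_eq_iff flip: ws)
    then show ?thesis ..
  qed
qed

lemma psd_imp_sum_proj: "psd A \<Longrightarrow> \<exists>ws. A = sum_proj ws"
  using psd_supported_imp_sum_proj[of UNIV A] by simp

lemma psd_induct [consumes 1, case_names zero add_proj]:
  assumes "psd A" "P (\<lambda>_ _. 0)" "\<And>w B. P B \<Longrightarrow> P (\<lambda>i j. proj w i j + B i j)"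
  shows "P A"
proof -
  obtain ws where "A = sum_proj ws"
    using psd_imp_sum_proj[OF assms(1)] by blast
  moreover have "P (sum_proj ws)"
    by (induction ws) (simp_all add: assms(2,3))
  ultimately show ?thesis by simp
qed

lemma quad_form_add: "quad_form (\<lambda>i j. A i j + B i j) v = quad_form A v + quad_form B v"
  unfolding quad_form_def by (simp add: algebra_simps sum.distrib)

lemma quad_form_proj: "quad_form (proj w) v = of_real ((cmod (braket v w))\<^sup>2)"
  unfolding quad_form_def proj_def braket_def complex_norm_square cnj_sum sum_product
  by (simp add: mult_ac)

lemma psd_add: "psd A \<Longrightarrow> psd B \<Longrightarrow> psd (\<lambda>i j. A i j + B i j)"
  by (simp add: psd_iff_quad_form quad_form_add)

lemma psd_proj: "psd (proj w)"
  by (simp add: psd_iff_quad_form quad_form_proj)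

lemma psd_scale:
  assumes "r \<ge> 0" "psd A"
  shows "psd (\<lambda>i j. of_real r * A i j)"
proof -
  have "quad_form (\<lambda>i j. of_real r * A i j) v = of_real r * quad_form A v" for v
    unfolding quad_form_def by (simp add: sum_distrib_left mult_ac)
  then show ?thesis
    using assms by (simp add: psd_iff_quad_form)
qed

lemma psd_diagonal:
  assumes "\<And>i. d i \<ge> 0"
  shows "psd (\<lambda>i j. if i = j then of_real (d i) else 0)" (is "psd ?D")
proof -
  have "quad_form ?D v = of_real (\<Sum>i\<in>UNIV. d i * (cmod (v i))\<^sup>2)" for v
  proof -
    have "quad_form ?D v = (\<Sum>i\<in>UNIV. of_real (d i) * (v i * cnj (v i)))"
      unfolding quad_form_def
      by (simp add: if_distrib[of "\<lambda>x. _ * x"] if_distrib[of "\<lambda>x. x * _"] mult_ac cong: if_cong)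
    then show ?thesis
      by (simp only: of_real_sum of_real_mult complex_norm_square)
  qed
  then show ?thesis
    using assms by (simp add: psd_iff_quad_form sum_nonneg)
qed

section \<open>Traces and tensor products\<close>

lemma psd_zero: "psd (\<lambda>_ _. 0)"
  by (simp add: psd_iff_quad_form quad_form_def)

lemma trace_prod_add_left:
  "trace_prod (\<lambda>i j. A i j + C i j) B = trace_prod A B + trace_prod C B"
  unfolding trace_prod_def by (simp add: algebra_simps sum.distrib)

lemma trace_prod_proj_left: "trace_prod (proj w) B = quad_form B w"
  unfolding trace_prod_def proj_def quad_form_def
  by (subst sum.swap) (simp add: mult_ac)

lemma trace_prod_psd_nonneg:
  assumes "psd A" "psd B"
  shows "Re (trace_prod A B) \<ge> 0"
  using assms(1)
proof (induction rule: psd_induct)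
  case zero
  then show ?case by (simp add: trace_prod_def)
next
  case (add_proj w C)
  have "Re (quad_form B w) \<ge> 0"
    using assms(2) by (simp add: psd_iff_quad_form)
  with add_proj show ?case
    by (simp add: trace_prod_add_left trace_prod_proj_left)
qed

lemma tensor_add_left: "tensor (\<lambda>i j. A i j + C i j) B = (\<lambda>x y. tensor A B x y + tensor C B x y)"
  by (simp add: tensor_def fun_eq_iff split_beta distrib_right)

lemma tensor_add_right: "tensor A (\<lambda>i j. B i j + C i j) = (\<lambda>x y. tensor A B x y + tensor A C x y)"
  by (simp add: tensor_def fun_eq_iff split_beta distrib_left)

lemma tensor_proj: "tensor (proj w) (proj z) = proj (\<lambda>(i, k). w i * z k)"
  by (simp add: tensor_def proj_def fun_eq_iff split_beta mult_ac)

lemma psd_tensor: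
  assumes "psd A" "psd B"
  shows "psd (tensor A B)"
  using assms(1)
proof (induction rule: psd_induct)
  case zero
  then show ?case by (simp add: tensor_def psd_zero split_beta')
next
  case (add_proj w C)
  have "psd (tensor (proj w) B)"
    using assms(2)
  proof (induction rule: psd_induct)
    case zero
    then show ?case by (simp add: tensor_def psd_zero split_beta')
  next
    case (add_proj z D)
    then show ?case by (simp add: tensor_add_right tensor_proj psd_add psd_proj)
  qed
  with add_proj show ?case by (simp add: tensor_add_left psd_add)
qed

lemma trace_prod_commute: "trace_prod A B = trace_prod B A"
  unfolding trace_prod_def by (subst sum.swap) (simp add: mult.commute)

lemma trace_prod_mono_left:
  assumes "psd (\<lambda>i j. Y i j - X i j)" "psd B"
  shows "Re (trace_prod X B) \<le> Re (trace_prod Y B)"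
proof -
  have "trace_prod Y B = trace_prod X B + trace_prod (\<lambda>i j. Y i j - X i j) B"
    by (simp flip: trace_prod_add_left)
  then show ?thesis
    using trace_prod_psd_nonneg[OF assms] by simp
qed

lemma tensor_diff_left: "tensor (\<lambda>i j. A i j - C i j) B = (\<lambda>x y. tensor A B x y - tensor C B x y)"
  by (simp add: tensor_def fun_eq_iff split_beta left_diff_distrib)

lemma trace_prod_tensor_mono:
  assumes "psd (\<lambda>i j. B i j - A i j)" "psd K" "psd \<rho>"
  shows "Re (trace_prod (tensor A K) \<rho>) \<le> Re (trace_prod (tensor B K) \<rho>)"
  using psd_tensor[OF assms(1,2)] assms(3) by (simp add: tensor_diff_left trace_prod_mono_left)

definition id_mat :: "'n \<Rightarrow> 'n \<Rightarrow> complex" where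
  "id_mat i j = (if i = j then 1 else 0)"

lemma povm_sum: "povm M \<Longrightarrow> (\<lambda>i j. \<Sum>k\<in>UNIV. M k i j) = id_mat"
  by (simp add: povm_def id_mat_def fun_eq_iff)

lemma trace_prod_tensor_sum_right:
  assumes "finite R"
  shows "trace_prod (tensor A (\<lambda>k l. \<Sum>r\<in>R. M r k l)) \<rho> = (\<Sum>r\<in>R. trace_prod (tensor A (M r)) \<rho>)"
  using assms
proof (induction rule: finite_induct)
  case empty
  then show ?case by (simp add: tensor_def trace_prod_def split_beta')
next
  case (insert r R)
  then show ?case by (simp add: tensor_add_right trace_prod_add_left)
qed

lemma trace_prod_scalar_id: "trace_prod (\<lambda>i j. c * id_mat i j) A = c * (\<Sum>i\<in>UNIV. A i i)"
  unfolding trace_prod_def id_mat_def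
  by (simp add: sum_distrib_left if_distrib[of "\<lambda>z. _ * z * _"] cong: if_cong)

lemma tensor_scalar_id: "tensor (\<lambda>i j. c * id_mat i j) id_mat = (\<lambda>x y. c * id_mat x y)"
  by (auto simp: tensor_def id_mat_def fun_eq_iff)

lemma povm_trace_prod_tensor_le:
  fixes M :: "'r::finite \<Rightarrow> 'd::finite \<Rightarrow> 'd \<Rightarrow> complex"
    and \<rho> :: "('a::finite \<times> 'd) \<Rightarrow> ('a \<times> 'd) \<Rightarrow> complex"
  assumes "povm M" "psd \<rho>" "psd B" "\<And>r. r \<in> S \<Longrightarrow> psd (\<lambda>i j. B i j - A r i j)"
  shows "(\<Sum>r\<in>S. Re (trace_prod (tensor (A r) (M r)) \<rho>)) \<le> Re (trace_prod (tensor B id_mat) \<rho>)"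
proof -
  have psd_M: "psd (M r)" for r
    using assms(1) by (simp add: povm_def)
  have "(\<Sum>r\<in>S. Re (trace_prod (tensor (A r) (M r)) \<rho>)) \<le> (\<Sum>r\<in>S. Re (trace_prod (tensor B (M r)) \<rho>))"
    using assms(2,4) psd_M by (intro sum_mono trace_prod_tensor_mono)
  also have "\<dots> \<le> (\<Sum>r\<in>UNIV. Re (trace_prod (tensor B (M r)) \<rho>))"
    using assms(2,3) psd_M by (intro sum_mono2 trace_prod_psd_nonneg psd_tensor) auto
  also have "\<dots> = Re (trace_prod (tensor B id_mat) \<rho>)"
    by (simp add: trace_prod_tensor_sum_right flip: povm_sum[OF assms(1)])
  finally show ?thesis .
qed

section \<open>The coin flipping protocol\<close>

lemma braket_phi_ang: "braket (phi_ang \<alpha>) (phi_ang \<beta>) = of_real (cos (\<alpha> - \<beta>))"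
  by (simp add: braket_def phi_ang_def UNIV_bool cos_diff)

lemma norm_braket_phi: "(cmod (braket (phi b' x) (phi b x)))\<^sup>2 = (if b' = b then 1 else 0)"
proof -
  have "angle True x = angle False x + pi / 2"
    by (simp add: angle_def)
  then show ?thesis
    by (cases b; cases b') (simp_all add: phi_def braket_phi_ang)
qed

lemma honest_distribution:
  "(\<forall>cA cB. cA \<noteq> cB \<longrightarrow> honest_joint cA cB = 0)
     \<and> honest_A Err = 0 \<and> honest_A (Bit False) = 1/2 \<and> honest_A (Bit True) = 1/2"
  unfolding honest_A_def honest_joint_def by (auto simp: UNIV_bool norm_braket_phi)

lemma cos_theta_nonneg: "cos theta \<ge> 0"
  unfolding theta_def by (rule cos_ge_zero) (use pi_gt_zero in auto)

lemma sin_theta_nonneg: "sin theta \<ge> 0"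
  unfolding theta_def by (rule sin_ge_zero) (use pi_gt_zero in auto)

lemma sin_cos_theta: "2 * sin theta * cos theta = sqrt 2 / 2"
  using sin_double[of theta] by (simp add: theta_def sin_45)

lemma cos_sq_minus_sin_sq_theta: "(cos theta)\<^sup>2 - (sin theta)\<^sup>2 = sqrt 2 / 2"
  using cos_double[of theta] by (simp add: theta_def cos_45)

lemma cos_sq_theta: "(cos theta)\<^sup>2 = 1/2 + sqrt 2 / 4"
  using cos_sq_minus_sin_sq_theta sin_cos_squared_add[of theta] by linarith

lemma phi_values:
  "phi False False = (\<lambda>q. if q then - of_real (sin theta) else of_real (cos theta))"
  "phi False True = (\<lambda>q. if q then of_real (sin theta) else of_real (cos theta))"
  "phi True False = (\<lambda>q. if q then of_real (cos theta) else of_real (sin theta))"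
  "phi True True = (\<lambda>q. if q then of_real (cos theta) else - of_real (sin theta))"
  by (auto simp: phi_def phi_ang_def angle_def cos_diff sin_diff cos_add sin_add)

(* A common upper bound of proj (phi b 0) and proj (phi b 1), chosen diagonal so that the bounds
   for b = 0 and b = 1 add up to a multiple of the identity. *)
definition alice_bound :: "bool \<Rightarrow> bool \<Rightarrow> bool \<Rightarrow> complex" where
  "alice_bound \<beta> i j = (if i = j then
     of_real ((if i = \<beta> then (cos theta)\<^sup>2 else (sin theta)\<^sup>2) + sin theta * cos theta) else 0)"

lemma psd_alice_bound: "psd (alice_bound \<beta>)"
  unfolding alice_bound_def
  using cos_theta_nonneg sin_theta_nonneg by (intro psd_diagonal) simp

lemma alice_bound_minus_proj_phi:
  "alice_bound \<beta> i j - proj (phi \<beta> x) i j =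
     of_real (sin theta * cos theta) * proj (\<lambda>k. if k \<and> \<beta> \<noteq> x then -1 else 1) i j"
  by (cases \<beta>; cases x; cases i; cases j)
    (simp_all add: alice_bound_def proj_def phi_values power2_eq_square)

lemma psd_alice_bound_minus_proj_phi: "psd (\<lambda>i j. alice_bound \<beta> i j - proj (phi \<beta> x) i j)"
  unfolding alice_bound_minus_proj_phi
  using cos_theta_nonneg sin_theta_nonneg by (intro psd_scale psd_proj) simp

lemma alice_bound_sum:
  "alice_bound False i j + alice_bound True i j = of_real (1 + sqrt 2 / 2) * id_mat i j"
proof -
  have "(cos theta)\<^sup>2 + sin theta * cos theta + ((sin theta)\<^sup>2 + sin theta * cos theta)
      = 1 + sqrt 2 / 2"
    using sin_cos_theta by (simp add: mult.commute)
  then show ?thesis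
    by (auto simp: alice_bound_def id_mat_def simp flip: of_real_add)
qed

lemma cheatA_dist_Bit:
  "cheatA_dist \<rho> M (Bit c) = 1/2 * (\<Sum>b'\<in>UNIV. \<Sum>x\<in>UNIV.
     Re (trace_prod (tensor (proj (phi (c \<noteq> b') x)) (M b' (c \<noteq> b', x))) \<rho>))"
  unfolding cheatA_dist_def by (cases c) (simp_all add: UNIV_bool algebra_simps)

lemma cheatA_dist_Bit_le:
  assumes "density \<rho>" "\<forall>b'. povm (M b')"
  shows "cheatA_dist \<rho> M (Bit c) \<le> 1/2 + sqrt 2 / 4"
proof -
  have psd_\<rho>: "psd \<rho>" and trace_\<rho>: "(\<Sum>x\<in>UNIV. \<rho> x x) = 1"
    using assms(1) by (simp_all add: density_def)
  let ?bound = "\<lambda>\<beta>. Re (trace_prod (tensor (alice_bound \<beta>) id_mat) \<rho>)"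
  have "(\<Sum>x\<in>UNIV. Re (trace_prod (tensor (proj (phi \<beta> x)) (M b' (\<beta>, x))) \<rho>)) \<le> ?bound \<beta>"
    for \<beta> b'
  proof -
    have "(\<Sum>x\<in>UNIV. Re (trace_prod (tensor (proj (phi \<beta> x)) (M b' (\<beta>, x))) \<rho>)) =
        (\<Sum>r\<in>Pair \<beta> ` UNIV. Re (trace_prod (tensor (proj (phi (fst r) (snd r))) (M b' r)) \<rho>))"
      by (simp add: sum.reindex inj_on_def)
    also have "\<dots> \<le> ?bound \<beta>"
      using assms(2) psd_\<rho> psd_alice_bound
      by (intro povm_trace_prod_tensor_le) (auto simp: psd_alice_bound_minus_proj_phi)
    finally show ?thesis .
  qed
  then have "cheatA_dist \<rho> M (Bit c) \<le> 1/2 * (\<Sum>b'\<in>UNIV. ?bound (c \<noteq> b'))"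
    unfolding cheatA_dist_Bit by (intro mult_left_mono sum_mono) auto
  also have "(\<Sum>b'\<in>UNIV. ?bound (c \<noteq> b')) = ?bound False + ?bound True"
    by (cases c) (simp_all add: UNIV_bool)
  also have "\<dots> =
      Re (trace_prod (tensor (\<lambda>i j. alice_bound False i j + alice_bound True i j) id_mat) \<rho>)"
    by (simp add: tensor_add_left trace_prod_add_left)
  also have "\<dots> = 1 + sqrt 2 / 2"
    by (simp add: alice_bound_sum tensor_scalar_id trace_prod_scalar_id trace_\<rho>)
  finally show ?thesis by simp
qed

lemma scalar_id_minus_proj_phi_sum:
  "of_real (2 * (cos theta)\<^sup>2) * id_mat i j - (proj (phi \<beta> False) i j + proj (phi \<beta> True) i j) =
     (if i = j then of_real (if i = \<beta> then 0 else 2 * ((cos theta)\<^sup>2 - (sin theta)\<^sup>2)) else 0)"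
  by (cases \<beta>; cases i; cases j) (simp_all add: id_mat_def proj_def phi_values power2_eq_square)

lemma psd_scalar_id_minus_proj_phi_sum:
  "psd (\<lambda>i j. of_real (2 * (cos theta)\<^sup>2) * id_mat i j
      - (proj (phi \<beta> False) i j + proj (phi \<beta> True) i j))"
proof -
  have "(cos theta)\<^sup>2 - (sin theta)\<^sup>2 \<ge> 0"
    unfolding cos_sq_minus_sin_sq_theta by simp
  then show ?thesis
    unfolding scalar_id_minus_proj_phi_sum by (intro psd_diagonal) simp
qed

lemma cheatB_dist_Bit:
  "cheatB_dist N (Bit c) = 1/4 * (\<Sum>b'\<in>UNIV.
     Re (trace_prod (\<lambda>i j. proj (phi (c \<noteq> b') False) i j + proj (phi (c \<noteq> b') True) i j) (N b')))"
  unfolding cheatB_dist_def trace_prod_add_left trace_prod_commute[of "N _"]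
  by (cases c) (simp_all add: UNIV_bool algebra_simps)

lemma cheatB_dist_Bit_le:
  assumes "povm N"
  shows "cheatB_dist N (Bit c) \<le> 1/2 + sqrt 2 / 4"
proof -
  have psd_N: "psd (N b')" for b'
    using assms by (simp add: povm_def)
  have "cheatB_dist N (Bit c) \<le> 1/4 * (\<Sum>b'\<in>UNIV.
      Re (trace_prod (\<lambda>i j. of_real (2 * (cos theta)\<^sup>2) * id_mat i j) (N b')))"
    unfolding cheatB_dist_Bit using psd_N psd_scalar_id_minus_proj_phi_sum
    by (intro mult_left_mono sum_mono trace_prod_mono_left) auto
  also have "\<dots> = 1/2 * (cos theta)\<^sup>2 * Re (\<Sum>b'\<in>UNIV. \<Sum>i\<in>UNIV. N b' i i)"
    unfolding trace_prod_scalar_id by (simp add: sum_distrib_left sum_divide_distrib algebra_simps)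
  also have "(\<Sum>b'\<in>UNIV. \<Sum>i\<in>UNIV. N b' i i) = (\<Sum>i\<in>UNIV. \<Sum>b'\<in>UNIV. N b' i i)"
    by (rule sum.swap)
  also have "\<dots> = 2"
    using assms by (simp add: povm_def)
  finally show ?thesis
    by (simp add: cos_sq_theta)
qed

theorem theorem2:
  fixes \<rho> :: "(bool \<times> 'd::finite) \<Rightarrow> (bool \<times> 'd) \<Rightarrow> complex"
    and M :: "bool \<Rightarrow> bool \<times> bool \<Rightarrow> 'd \<Rightarrow> 'd \<Rightarrow> complex"
    and N :: "bool \<Rightarrow> bool \<Rightarrow> bool \<Rightarrow> complex"
  defines "\<delta> \<equiv> (42 / 100 :: real)"
  shows "(\<forall>cA cB. cA \<noteq> cB \<longrightarrow> honest_joint cA cB = 0)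
       \<and> honest_A Err = 0 \<and> honest_A (Bit False) = 1/2 \<and> honest_A (Bit True) = 1/2
       \<and> (density \<rho> \<and> (\<forall>b'. povm (M b')) \<longrightarrow>
            (\<forall>b. cheatA_dist \<rho> M (Bit b) \<le> 1/2 + \<delta>))
       \<and> (povm N \<longrightarrow> (\<forall>b. cheatB_dist N (Bit b) \<le> 1/2 + \<delta>))"
proof -
  have "sqrt 2 \<le> 3/2"
    by (rule real_le_lsqrt) (simp_all add: power2_eq_square)
  then have bias: "1/2 + sqrt 2 / 4 \<le> 1/2 + \<delta>"
    by (simp add: \<delta>_def)
  show ?thesis
    using honest_distribution cheatA_dist_Bit_le[of \<rho> M] cheatB_dist_Bit_le[of N] bias
    by (meson order_trans)
qed

end
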